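(* Let $C_\infty=(\mathbb{N},+)$. Let $\mathcal{R}$ be the commutative DGA-algebra over $\mathbb{H}C_\infty$ with $\mathcal{R}_0$ free on $\{v_0\}$ ($\pi v_0=0$), $\mathcal{R}_1$ free on $\{w_0\}$ ($\pi w_0=1$), $\mathcal{R}_n=0$ for $n\ge2$, zero differential, augmentation the canonical isomorphism $\mathcal{R}_0\cong\mathbb{Z}$, and multiplication $v_0\circ v_0=v_0$, $v_0\circ w_0=w_0$, $w_0\circ w_0=0$. Then there are morphisms of DGA-algebras over $\mathbb{H}C_\infty$, $f:\mathbf{B}(\mathcal{Z}C_\infty)\to\mathcal{R}$ and $g:\mathcal{R}\to\mathbf{B}(\mathcal{Z}C_\infty)$, determined by $f[\,]=v_0$, $f[x]=x\,\big((x-1)_*w_0\big)$ (for $x\ge1$), $g v_0=[\,]$, $g w_0=[1]$, and they form a contraction: $fg=\mathrm{id}_{\mathcal{R}}$ and there is a chain homotopy $\Phi$ from $gf$ to $\mathrm{id}_{\mathbf{B}(\mathcal{Z}C_\infty)}$ (a morphism of $\mathbb{H}C_\infty$-modules of degree $+1$ with $\partial\Phi+\Phi\partial=gf-\mathrm{id}$, up to the sign convention) satisfying $\Phi g=0$, $f\Phi=0$, $\Phi\Phi=0$.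
   Context: For a commutative monoid $M$ (here $C_\infty$, written additively with identity $0$; read $xy$ as $x+y$), $\mathbb{H}M$ has objects the elements of $M$ and morphisms $(x,y):x\to xy$; an $\mathbb{H}M$-module is a functor $\mathbb{H}M\to\mathbf{Ab}$, i.e. groups $\mathcal{A}(x)$ with $y_*:\mathcal{A}(x)\to\mathcal{A}(xy)$, $y_*z_*=(yz)_*$, $e_*=\mathrm{id}$. A free $\mathbb{H}M$-module on a set $S$ with $\pi:S\to M$ has $(\cdot)(x)$ free abelian on $\{(u,s):u\,\pi(s)=x\}$, $y_*(u,s)=(uy,s)$, $s=(e,s)$. Chain complexes of $\mathbb{H}M$-modules form a symmetric monoidal category (tensor product $(\mathcal{A}\otimes\mathcal{B})(x)=\bigoplus_{zt=x}\mathcal{A}(z)\otimes\mathcal{B}(t)/(u_*a\otimes b=a\otimes u_*b)$, Koszul signs, unit the constant module $\mathbb{Z}$); a commutative DGA-algebra over $\mathbb{H}M$ is a commutative monoid there with an augmentation morphism of monoids to $\mathbb{Z}$. $\mathbf{B}(\mathcal{Z}M)$ is the (commutative DGA-) bar construction of $\mathcal{Z}M$: in degree $0$ it is free on $[\,]$ (with $\pi[\,]=e$), and for $n\ge1$ it is the free $\mathbb{H}M$-module on the cells $[x_1|\cdots|x_n]$, $x_i\in M$, $\pi[x_1|\cdots|x_n]=x_1\cdots x_n$, with $[x_1|\cdots|x_n]=0$ if some $x_i=e$; differential $\partial[x_1|\cdots|x_n]=x_{1*}[x_2|\cdots|x_n]+\sum_{i=1}^{n-1}(-1)^i[x_1|\cdots|x_ix_{i+1}|\cdots|x_n]+(-1)^nx_{n*}[x_1|\cdots|x_{n-1}]$;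 multiplication the shuffle product $[x_1|\cdots|x_n]\circ[x_{n+1}|\cdots|x_{n+m}]=\sum_\sigma\mathrm{sgn}(\sigma)[x_{\sigma^{-1}(1)}|\cdots|x_{\sigma^{-1}(n+m)}]$ over $(n,m)$-shuffles; unit $[\,]$; augmentation $\mathbf{B}_0\cong\mathbb{Z}$. Morphisms of DGA-algebras preserve differential, multiplication, unit and augmentation; morphisms from a free module are determined by values on generators. *)

theory Defs
  imports "HOL-Library.Poly_Mapping" "HOL-Combinatorics.Permutations"
begin

text \<open>Modules over HC_infinity (C_infinity = (nat,+)) that are free on a set of
generators S with grading pi are encoded as follows: the group A(x) is the set of
integer linear combinations (finitely supported functions to int, 'a frag) of generators s with pi s at most x,
the basis element (u,s) of A(x) (u + pi s = x) being represented by frag_of s.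
With this encoding y_* from A(x) to A(x+y), sending (u,s) to (u+y,s), is the inclusion
(identity on representatives).  Chain degree is given by a degree function on
generators; an element of A(x) may have components in several degrees.\<close>

record 'a hdga =
  carr :: "nat \<Rightarrow> ('a \<Rightarrow>\<^sub>0 int) set"
  gdeg :: "'a \<Rightarrow> nat"
  diff :: "('a \<Rightarrow>\<^sub>0 int) \<Rightarrow> ('a \<Rightarrow>\<^sub>0 int)"
  mult :: "('a \<Rightarrow>\<^sub>0 int) \<Rightarrow> ('a \<Rightarrow>\<^sub>0 int) \<Rightarrow> ('a \<Rightarrow>\<^sub>0 int)"  \<comment> \<open>A(z) x A(t) to A(z+t)\<close>
  unt  :: "'a \<Rightarrow>\<^sub>0 int"
  aug  :: "('a \<Rightarrow>\<^sub>0 int) \<Rightarrow> int"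

definition homog :: "('a \<Rightarrow> nat) \<Rightarrow> nat \<Rightarrow> ('a \<Rightarrow>\<^sub>0 int) \<Rightarrow> bool" where
  "homog deg n c \<longleftrightarrow> (\<forall>k \<in> Poly_Mapping.keys c. deg k = n)"

text \<open>Morphism of HC_infinity-modules (of chain complexes' underlying graded modules)
of degree d: additive on each A(x), compatible with the y_* (which are inclusions in
our encoding), raising chain degree by d.\<close>
definition mod_mor :: "'a hdga \<Rightarrow> 'b hdga \<Rightarrow> nat \<Rightarrow> (nat \<Rightarrow> ('a \<Rightarrow>\<^sub>0 int) \<Rightarrow> ('b \<Rightarrow>\<^sub>0 int)) \<Rightarrow> bool" where
  "mod_mor A B d \<phi> \<longleftrightarrow>
     (\<forall>x. \<forall>a \<in> carr A x. \<phi> x a \<in> carr B x) \<and>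
     (\<forall>x. \<forall>a \<in> carr A x. \<forall>b \<in> carr A x. \<phi> x (a + b) = \<phi> x a + \<phi> x b) \<and>
     (\<forall>x y. \<forall>a \<in> carr A x. \<phi> (x + y) a = \<phi> x a) \<and>
     (\<forall>x n. \<forall>a \<in> carr A x. homog (gdeg A) n a \<longrightarrow> homog (gdeg B) (n + d) (\<phi> x a))"

definition dga_mor :: "'a hdga \<Rightarrow> 'b hdga \<Rightarrow> (nat \<Rightarrow> ('a \<Rightarrow>\<^sub>0 int) \<Rightarrow> ('b \<Rightarrow>\<^sub>0 int)) \<Rightarrow> bool" where
  "dga_mor A B \<phi> \<longleftrightarrow>
     mod_mor A B 0 \<phi> \<and>
     (\<forall>x. \<forall>a \<in> carr A x. \<phi> x (diff A a) = diff B (\<phi> x a)) \<and>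
     (\<forall>z t. \<forall>a \<in> carr A z. \<forall>b \<in> carr A t. \<phi> (z + t) (mult A a b) = mult B (\<phi> z a) (\<phi> t b)) \<and>
     \<phi> 0 (unt A) = unt B \<and>
     (\<forall>x. \<forall>a \<in> carr A x. aug B (\<phi> x a) = aug A a)"

text \<open>Cells [x_1|...|x_n] are lists of naturals; pi of a cell is its sum.
A cell with some entry 0 (= e) is zero.\<close>

definition bcell :: "nat list \<Rightarrow> nat list \<Rightarrow>\<^sub>0 int" where
  "bcell s = (if 0 \<in> set s then 0 else frag_of s)"

definition bcells :: "nat \<Rightarrow> nat list set" where
  "bcells x = {s. (\<forall>i \<in> set s. 0 < i) \<and> sum_list s \<le> x}"

text \<open>merge i s = [x_1|...|x_i x_{i+1}|...|x_n] (1-based i).\<close>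
definition bmerge :: "nat \<Rightarrow> nat list \<Rightarrow> nat list" where
  "bmerge i s = take (i - 1) s @ [s ! (i - 1) + s ! i] @ drop (i + 1) s"

definition bd_cell :: "nat list \<Rightarrow> nat list \<Rightarrow>\<^sub>0 int" where
  "bd_cell s = (if s = [] then 0 else
      bcell (tl s)
      + (\<Sum>i \<in> {1..<length s}. frag_cmul ((-1) ^ i) (bcell (bmerge i s)))
      + frag_cmul ((-1) ^ length s) (bcell (butlast s)))"

definition shuffles :: "nat \<Rightarrow> nat \<Rightarrow> (nat \<Rightarrow> nat) set" where
  "shuffles n m = {\<sigma>. \<sigma> permutes {..<n + m} \<and>
      (\<forall>i j. i < j \<and> j < n \<longrightarrow> \<sigma> i < \<sigma> j) \<and>
      (\<forall>i j. n \<le> i \<and> i < j \<and> j < n + m \<longrightarrow> \<sigma> i < \<sigma> j)}"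

definition shuffle_cells :: "nat list \<Rightarrow> nat list \<Rightarrow> nat list \<Rightarrow>\<^sub>0 int" where
  "shuffle_cells s t = (\<Sum>\<sigma> \<in> shuffles (length s) (length t).
      frag_cmul (sign \<sigma>) (bcell (map (\<lambda>j. (s @ t) ! inv \<sigma> j) [0..<length s + length t])))"

definition Bbar :: "nat list hdga" where
  "Bbar = \<lparr> carr = (\<lambda>x. {c. Poly_Mapping.keys c \<subseteq> bcells x}),
            gdeg = length,
            diff = frag_extend bd_cell,
            mult = (\<lambda>a b. frag_extend (\<lambda>s. frag_extend (\<lambda>t. shuffle_cells s t) b) a),
            unt = frag_of [],
            aug = (\<lambda>c. Poly_Mapping.lookup c []) \<rparr>"

datatype rgen = V0 | W0

definition rcells :: "nat \<Rightarrow> rgen set" where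
  "rcells x = (if 1 \<le> x then {V0, W0} else {V0})"

fun rdeg :: "rgen \<Rightarrow> nat" where
  "rdeg V0 = 0" | "rdeg W0 = 1"

fun rmul_gen :: "rgen \<Rightarrow> rgen \<Rightarrow> rgen \<Rightarrow>\<^sub>0 int" where
  "rmul_gen V0 V0 = frag_of V0"
| "rmul_gen V0 W0 = frag_of W0"
| "rmul_gen W0 V0 = frag_of W0"
| "rmul_gen W0 W0 = 0"

definition Rdga :: "rgen hdga" where
  "Rdga = \<lparr> carr = (\<lambda>x. {c. Poly_Mapping.keys c \<subseteq> rcells x}),
            gdeg = rdeg,
            diff = (\<lambda>_. 0),
            mult = (\<lambda>a b. frag_extend (\<lambda>p. frag_extend (\<lambda>q. rmul_gen p q) b) a),
            unt = frag_of V0,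
            aug = (\<lambda>c. Poly_Mapping.lookup c V0) \<rparr>"

end

theory Submission
  imports Defs
begin

text \<open>The map f kills every cell of length at least two, and g identifies R with the span
  of [] and [1], so f g = id.  The homotopy is
  \<Phi>[v|x] = (-1)^|v| (sum over 0 < i < x of [v|i|1]).
  It vanishes on [] and on every cell ending in 1, in particular on the images of g and of \<Phi>;
  and f \<Phi> = 0 because \<Phi> produces cells of length at least two.  In
  \<partial>\<Phi> + \<Phi>\<partial> the faces of [v|i|1] that do not touch the last two entries cancel against
  \<Phi> of the corresponding faces of [v|x], and the remaining faces telescope in i.\<close>

lemma frag_cmul_diff_distrib2: "frag_cmul k (a - b) = frag_cmul k a - frag_cmul k b"
  by (metis add_diff_cancel diff_add_cancel frag_cmul_distrib2)

lemma sum_frag_const: "(\<Sum>i\<in>I. a) = frag_cmul (int (card I)) a"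
  by (induction I rule: infinite_finite_induct) (simp_all add: frag_cmul_distrib)

lemma frag_extend_zero_fun [simp]: "frag_extend (\<lambda>s. 0) c = 0"
  by (rule frag_extend_eq_0) simp

lemma frag_extend_diff_fun:
  "frag_extend (\<lambda>s. f s - g s) c = frag_extend f c - frag_extend g c"
  using subset_UNIV
  by (induction c rule: frag_induction) (auto simp: frag_extend_diff algebra_simps)

lemma frag_extend_frag_extend:
  "frag_extend h (frag_extend g c) = frag_extend (\<lambda>s. frag_extend h (g s)) c"
  using subset_UNIV
  by (induction c rule: frag_induction) (auto simp: frag_extend_diff)

lemma lookup_frag_extend_delta:
  assumes "\<And>s. Poly_Mapping.lookup (h s) t = (if s = s\<^sub>0 then 1 else 0)"
  shows "Poly_Mapping.lookup (frag_extend h c) t = Poly_Mapping.lookup c s\<^sub>0"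
  using subset_UNIV
  by (induction c rule: frag_induction) (auto simp: assms frag_extend_diff lookup_minus)

definition frag_extend2 ::
  "('a \<Rightarrow> 'b \<Rightarrow> 'c \<Rightarrow>\<^sub>0 int) \<Rightarrow> ('a \<Rightarrow>\<^sub>0 int) \<Rightarrow> ('b \<Rightarrow>\<^sub>0 int) \<Rightarrow> 'c \<Rightarrow>\<^sub>0 int" where
  "frag_extend2 h a b = frag_extend (\<lambda>s. frag_extend (h s) b) a"

lemma frag_extend_frag_extend2:
  assumes "Poly_Mapping.keys a \<subseteq> S" "Poly_Mapping.keys b \<subseteq> T"
    and gen: "\<And>s t. s \<in> S \<Longrightarrow> t \<in> T \<Longrightarrow> frag_extend L (h s t) = frag_extend2 k (M s) (N t)"
  shows "frag_extend L (frag_extend2 h a b) = frag_extend2 k (frag_extend M a) (frag_extend N b)"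
  using assms(1)
proof (induction a rule: frag_induction)
  case (one s)
  from assms(2) show ?case
  proof (induction b rule: frag_induction)
    case (one t)
    then show ?case using gen[OF \<open>s \<in> S\<close> one] by (simp add: frag_extend2_def)
  qed (simp_all add: frag_extend2_def frag_extend_diff frag_extend_diff_fun)
qed (simp_all add: frag_extend2_def frag_extend_diff)

lemma homog_0 [simp]: "homog deg n 0"
  by (simp add: homog_def)

lemma homog_frag_of [simp]: "homog deg n (frag_of s) \<longleftrightarrow> deg s = n"
  by (simp add: homog_def)

lemma homog_add: "homog deg n a \<Longrightarrow> homog deg n b \<Longrightarrow> homog deg n (a + b)"
  using keys_add[of a b] by (auto simp: homog_def)

lemma homog_frag_cmul: "homog deg n a \<Longrightarrow> homog deg n (frag_cmul k a)"
  by (simp add: homog_def)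

lemma homog_sum: "(\<And>i. i \<in> I \<Longrightarrow> homog deg n (f i)) \<Longrightarrow> homog deg n (sum f I)"
  using keys_sum[of f I] by (auto simp: homog_def)

lemma homog_frag_extend:
  assumes "homog deg n c" "\<And>s. deg s = n \<Longrightarrow> homog deg' m (h s)"
  shows "homog deg' m (frag_extend h c)"
  using assms keys_frag_extend[of h c] by (fastforce simp: homog_def)

lemma mod_mor_frag_extend:
  assumes carr_A: "\<And>x. carr A x = {c. Poly_Mapping.keys c \<subseteq> cells_A x}"
    and carr_B: "\<And>x. carr B x = {c. Poly_Mapping.keys c \<subseteq> cells_B x}"
    and cells: "\<And>x s. s \<in> cells_A x \<Longrightarrow> Poly_Mapping.keys (h s) \<subseteq> cells_B x"
    and degree: "\<And>s. homog (gdeg B) (gdeg A s + d) (h s)"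
  shows "mod_mor A B d (\<lambda>x. frag_extend h)"
  unfolding mod_mor_def
proof (intro conjI allI ballI impI)
  fix x a assume "a \<in> carr A x"
  then show "frag_extend h a \<in> carr B x"
    using keys_frag_extend[of h a] cells by (fastforce simp: carr_A carr_B)
next
  fix n a assume "homog (gdeg A) n a"
  then show "homog (gdeg B) (n + d) (frag_extend h a)"
    by (rule homog_frag_extend) (use degree in blast)
qed (simp_all add: frag_extend_add)

lemma strict_mono_lessThan_add:
  fixes \<sigma> :: "nat \<Rightarrow> nat"
  assumes mono: "\<forall>i j. i < j \<and> j < m \<longrightarrow> \<sigma> i < \<sigma> j" and "i + k < m"
  shows "\<sigma> i + k \<le> \<sigma> (i + k)"
  using \<open>i + k < m\<close>
proof (induction k)
  case (Suc k)
  then have "\<sigma> (i + k) < \<sigma> (i + Suc k)" using mono by simp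
  with Suc show ?case by simp
qed simp

lemma permutes_strict_mono_eq_id:
  fixes \<sigma> :: "nat \<Rightarrow> nat"
  assumes perm: "\<sigma> permutes {..<m}" and mono: "\<forall>i j. i < j \<and> j < m \<longrightarrow> \<sigma> i < \<sigma> j"
  shows "\<sigma> = id"
proof
  fix i
  show "\<sigma> i = id i"
  proof (cases "i < m")
    case True
    have "\<sigma> 0 + i \<le> \<sigma> i" using strict_mono_lessThan_add[OF mono, of 0 i] True by simp
    moreover have "\<sigma> i + (m - 1 - i) \<le> \<sigma> (m - 1)"
      using strict_mono_lessThan_add[OF mono, of i "m - 1 - i"] True by simp
    moreover have "\<sigma> (m - 1) < m" using permutes_in_image[OF perm] True by simp
    ultimately show ?thesis by simp
  qed (simp add: permutes_not_in[OF perm])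
qed

lemma shuffles_0_left: "shuffles 0 m = {id}"
  using permutes_strict_mono_eq_id[of _ m] by (auto simp: shuffles_def permutes_id)

lemma shuffles_0_right: "shuffles n 0 = {id}"
  using permutes_strict_mono_eq_id[of _ n] by (auto simp: shuffles_def permutes_id)

lemma transpose_0_1_neq_id: "transpose (0::nat) 1 \<noteq> id"
  by (metis id_apply transpose_apply_first zero_neq_one)

lemma shuffles_1_1: "shuffles 1 1 = {id, transpose 0 1}"
proof -
  let ?P = "{\<sigma>. \<sigma> permutes {..<2::nat}}"
  have "{id, transpose 0 1} \<subseteq> ?P"
    by (simp add: permutes_id permutes_swap_id)
  moreover have "card {id, transpose (0::nat) 1} = card ?P"
    using card_permutations[of "{..<2::nat}" 2] transpose_0_1_neq_id by simp
  ultimately have "{id, transpose 0 1} = ?P"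
    by (rule card_subset_eq[OF finite_permutations, rotated]) simp
  then show ?thesis
    by (auto simp: shuffles_def numeral_2_eq_2)
qed

lemma bcell_pos: "\<forall>i \<in> set s. 0 < i \<Longrightarrow> bcell s = frag_of s"
  by (auto simp: bcell_def)

lemma bcells_pos: "s \<in> bcells x \<Longrightarrow> \<forall>i \<in> set s. 0 < i"
  by (simp add: bcells_def)

lemma homog_bcell: "length s = n \<Longrightarrow> homog length n (bcell s)"
  by (simp add: bcell_def)

lemma shuffle_cells_Nil_left: "\<forall>i \<in> set t. 0 < i \<Longrightarrow> shuffle_cells [] t = frag_of t"
  by (simp add: shuffle_cells_def shuffles_0_left bcell_pos map_nth)

lemma shuffle_cells_Nil_right: "\<forall>i \<in> set s. 0 < i \<Longrightarrow> shuffle_cells s [] = frag_of s"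
  by (simp add: shuffle_cells_def shuffles_0_right bcell_pos map_nth)

lemma shuffle_cells_1_1: "shuffle_cells [1] [1] = 0"
  using shuffles_1_1 transpose_0_1_neq_id by (simp add: shuffle_cells_def sign_swap_id bcell_def)

lemma homog_shuffle_cells: "homog length (length s + length t) (shuffle_cells s t)"
  unfolding shuffle_cells_def
  by (intro homog_sum homog_frag_cmul homog_bcell) simp

lemma homog_bd_cell: "homog length (length s - 1) (bd_cell s)"
  by (auto simp: bd_cell_def bmerge_def intro!: homog_add homog_sum homog_frag_cmul homog_bcell)

definition frag_append :: "'a list \<Rightarrow> ('a list \<Rightarrow>\<^sub>0 int) \<Rightarrow> 'a list \<Rightarrow>\<^sub>0 int" where
  "frag_append ys c = frag_extend (\<lambda>s. frag_of (s @ ys)) c"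

lemma frag_append_of [simp]: "frag_append ys (frag_of s) = frag_of (s @ ys)"
  by (simp add: frag_append_def)

lemma frag_append_add: "frag_append ys (a + b) = frag_append ys a + frag_append ys b"
  by (simp add: frag_append_def frag_extend_add)

lemma frag_append_diff: "frag_append ys (a - b) = frag_append ys a - frag_append ys b"
  by (simp add: frag_append_def frag_extend_diff)

lemma frag_append_cmul: "frag_append ys (frag_cmul k a) = frag_cmul k (frag_append ys a)"
  by (simp add: frag_append_def frag_extend_cmul)

lemma frag_append_sum: "finite I \<Longrightarrow> frag_append ys (\<Sum>i\<in>I. f i) = (\<Sum>i\<in>I. frag_append ys (f i))"
  by (simp add: frag_append_def frag_extend_sum o_def)

lemma frag_append_frag_append: "frag_append zs (frag_append ys c) = frag_append (ys @ zs) c"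
  by (simp add: frag_append_def frag_extend_frag_extend)

lemma frag_append_bcell: "0 < a \<Longrightarrow> frag_append [a] (bcell s) = bcell (s @ [a])"
  by (auto simp: bcell_def frag_append_def)

definition bd_front :: "nat list \<Rightarrow> nat list \<Rightarrow>\<^sub>0 int" where
  "bd_front u = (if u = [] then 0 else
     bcell (tl u) + (\<Sum>i\<in>{1..<length u}. frag_cmul ((-1)^i) (bcell (bmerge i u))))"

lemma bd_cell_eq_bd_front:
  "u \<noteq> [] \<Longrightarrow> bd_cell u = bd_front u + frag_cmul ((-1)^length u) (bcell (butlast u))"
  by (simp add: bd_cell_def bd_front_def)

lemma homog_bd_front: "homog length (length u - 1) (bd_front u)"
  by (auto simp: bd_front_def bmerge_def intro!: homog_add homog_sum homog_frag_cmul homog_bcell)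

lemma bmerge_snoc: "1 \<le> i \<Longrightarrow> i < length u \<Longrightarrow> bmerge i (u @ [a]) = bmerge i u @ [a]"
  by (auto simp: bmerge_def nth_append)

lemma bmerge_length_snoc: "u \<noteq> [] \<Longrightarrow> bmerge (length u) (u @ [a]) = butlast u @ [last u + a]"
  by (auto simp: bmerge_def nth_append butlast_conv_take last_conv_nth)

lemma bd_front_snoc:
  assumes u: "u \<noteq> []" "\<forall>i \<in> set u. 0 < i" and a: "0 < a"
  shows "bd_front (u @ [a]) = frag_append [a] (bd_front u)
           + frag_cmul ((-1)^length u) (frag_of (butlast u @ [last u + a]))"
proof -
  have merged_pos: "\<forall>i \<in> set (butlast u @ [last u + a]). 0 < i"
    using u a by (auto dest: in_set_butlastD)
  have "(\<Sum>i\<in>{1..<Suc (length u)}. frag_cmul ((-1)^i) (bcell (bmerge i (u @ [a]))))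
      = (\<Sum>i\<in>{1..<length u}. frag_cmul ((-1)^i) (bcell (bmerge i u @ [a])))
        + frag_cmul ((-1)^length u) (frag_of (butlast u @ [last u + a]))"
    using u merged_pos
    by (simp add: sum.atLeastLessThan_Suc bmerge_snoc bmerge_length_snoc bcell_pos Suc_leI)
  then show ?thesis
    using u a by (simp add: bd_front_def frag_append_add frag_append_sum frag_append_cmul
        frag_append_bcell add.assoc)
qed

lemma bd_cell_snoc:
  assumes v: "v \<noteq> []" "\<forall>i \<in> set v. 0 < i" and x: "0 < x"
  shows "bd_cell (v @ [x]) = frag_append [x] (bd_front v)
           + frag_cmul ((-1)^length v) (frag_of (butlast v @ [last v + x]))
           - frag_cmul ((-1)^length v) (frag_of v)"
  using bd_front_snoc[OF v x] v by (simp add: bd_cell_eq_bd_front bcell_pos)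

lemma bd_cell_snoc_snoc_1:
  assumes v: "v \<noteq> []" "\<forall>j \<in> set v. 0 < j" and i: "0 < i"
  shows "bd_cell (v @ [i, 1]) = frag_append [i, 1] (bd_front v)
     + frag_cmul ((-1)^length v) (frag_of (butlast v @ [last v + i, 1]))
     - frag_cmul ((-1)^length v) (frag_of (v @ [Suc i]))
     + frag_cmul ((-1)^length v) (frag_of (v @ [i]))"
proof -
  have vi: "v @ [i] \<noteq> []" "\<forall>j \<in> set (v @ [i]). 0 < j" using v i by auto
  show ?thesis
    using bd_cell_snoc[OF vi, of 1] bd_front_snoc[OF v i]
    by (simp add: frag_append_add frag_append_cmul frag_append_frag_append algebra_simps
        minus_frag_cmul[symmetric] del: minus_frag_cmul)
qed

section \<open>The maps f and g\<close>

definition proj_gen :: "nat list \<Rightarrow> rgen \<Rightarrow>\<^sub>0 int" where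
  "proj_gen s = (if s = [] then frag_of V0
     else if length s = 1 then frag_cmul (int (hd s)) (frag_of W0) else 0)"

abbreviation bar_proj :: "(nat list \<Rightarrow>\<^sub>0 int) \<Rightarrow> rgen \<Rightarrow>\<^sub>0 int" where
  "bar_proj \<equiv> frag_extend proj_gen"

lemma bar_proj_long: "homog length n c \<Longrightarrow> 2 \<le> n \<Longrightarrow> bar_proj c = 0"
  by (rule frag_extend_eq_0) (auto simp: homog_def proj_gen_def)

lemma bar_proj_bd_cell: "\<forall>i \<in> set s. 0 < i \<Longrightarrow> bar_proj (bd_cell s) = 0"
proof (induction s rule: induct_list012)
  case (3 a b s)
  show ?case
  proof (cases s)
    case Nil
    have "bd_cell [a, b] = frag_of [b] - frag_of [a + b] + frag_of [a]"
      using "3.prems" Nil by (simp add: bd_cell_def bmerge_def bcell_def)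
    then have "bar_proj (bd_cell (a # b # s))
        = frag_cmul (int b) (frag_of W0) - frag_cmul (int (a + b)) (frag_of W0)
          + frag_cmul (int a) (frag_of W0)"
      using Nil by (simp add: frag_extend_add frag_extend_diff proj_gen_def)
    also have "\<dots> = 0"
      by (rule poly_mapping_eqI) (simp add: lookup_add lookup_minus algebra_simps)
    finally show ?thesis .
  next
    case Cons
    then show ?thesis by (intro bar_proj_long[OF homog_bd_cell]) simp
  qed
qed (simp_all add: bd_cell_def)

lemma rmul_gen_V0_left: "rmul_gen V0 = frag_of"
proof
  show "rmul_gen V0 p = frag_of p" for p by (cases p) simp_all
qed

lemma rmul_gen_V0_right: "(\<lambda>p. rmul_gen p V0) = frag_of"
proof
  show "rmul_gen p V0 = frag_of p" for p by (cases p) simp_all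
qed

lemma bar_proj_shuffle_cells:
  assumes "\<forall>i \<in> set s. 0 < i" "\<forall>i \<in> set t. 0 < i"
  shows "bar_proj (shuffle_cells s t) = frag_extend2 rmul_gen (proj_gen s) (proj_gen t)"
proof (cases "s = [] \<or> t = []")
  case True
  then show ?thesis
    using assms by (auto simp: shuffle_cells_Nil_left shuffle_cells_Nil_right frag_extend2_def
        rmul_gen_V0_left rmul_gen_V0_right proj_gen_def[of "[]"] simp flip: frag_expansion)
next
  case False
  then have "bar_proj (shuffle_cells s t) = 0"
    by (intro bar_proj_long[OF homog_shuffle_cells]) (cases s; cases t; simp)
  moreover have "proj_gen s = frag_cmul (if length s = 1 then int (hd s) else 0) (frag_of W0)"
    using False by (simp add: proj_gen_def)
  moreover have "proj_gen t = frag_cmul (if length t = 1 then int (hd t) else 0) (frag_of W0)"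
    using False by (simp add: proj_gen_def)
  ultimately show ?thesis by (simp add: frag_extend2_def frag_extend_cmul)
qed

lemma dga_mor_bar_proj: "dga_mor Bbar Rdga (\<lambda>x. bar_proj)"
  unfolding dga_mor_def
proof (intro conjI allI ballI)
  show "mod_mor Bbar Rdga 0 (\<lambda>x. bar_proj)"
  proof (rule mod_mor_frag_extend)
    fix x s assume "s \<in> bcells x"
    then show "Poly_Mapping.keys (proj_gen s) \<subseteq> rcells x"
      by (auto simp: proj_gen_def rcells_def bcells_def length_Suc_conv)
  next
    fix s :: "nat list"
    show "homog (gdeg Rdga) (gdeg Bbar s + 0) (proj_gen s)"
      by (auto simp: proj_gen_def Rdga_def Bbar_def homog_def)
  qed (simp_all add: Bbar_def Rdga_def)
next
  fix x a assume "a \<in> carr Bbar x"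
  then have "bar_proj (bd_cell s) = 0" if "s \<in> Poly_Mapping.keys a" for s
    using that by (intro bar_proj_bd_cell bcells_pos) (auto simp: Bbar_def)
  then show "bar_proj (diff Bbar a) = diff Rdga (bar_proj a)"
    by (simp add: Bbar_def Rdga_def frag_extend_frag_extend frag_extend_eq_0)
  show "aug Rdga (bar_proj a) = aug Bbar a"
    by (simp add: Bbar_def Rdga_def lookup_frag_extend_delta proj_gen_def)
next
  fix z t a b assume "a \<in> carr Bbar z" "b \<in> carr Bbar t"
  then show "bar_proj (mult Bbar a b) = mult Rdga (bar_proj a) (bar_proj b)"
    using frag_extend_frag_extend2[of a "bcells z" b "bcells t" proj_gen shuffle_cells rmul_gen
        proj_gen proj_gen]
    by (simp add: Bbar_def Rdga_def frag_extend2_def bar_proj_shuffle_cells bcells_pos)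
qed (simp add: Bbar_def Rdga_def proj_gen_def)

fun incl_gen :: "rgen \<Rightarrow> nat list \<Rightarrow>\<^sub>0 int" where
  "incl_gen V0 = frag_of []"
| "incl_gen W0 = frag_of [1]"

abbreviation bar_incl :: "(rgen \<Rightarrow>\<^sub>0 int) \<Rightarrow> nat list \<Rightarrow>\<^sub>0 int" where
  "bar_incl \<equiv> frag_extend incl_gen"

lemma bar_incl_rmul_gen: "bar_incl (rmul_gen p q) = frag_extend2 shuffle_cells (incl_gen p) (incl_gen q)"
  using shuffle_cells_1_1
  by (cases p; cases q) (simp_all add: frag_extend2_def shuffle_cells_Nil_left shuffle_cells_Nil_right)

lemma dga_mor_bar_incl: "dga_mor Rdga Bbar (\<lambda>x. bar_incl)"
  unfolding dga_mor_def
proof (intro conjI allI ballI)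
  show "mod_mor Rdga Bbar 0 (\<lambda>x. bar_incl)"
  proof (rule mod_mor_frag_extend)
    fix x p assume "p \<in> rcells x"
    then show "Poly_Mapping.keys (incl_gen p) \<subseteq> bcells x"
      by (cases p) (auto simp: rcells_def bcells_def split: if_splits)
  next
    fix p
    show "homog (gdeg Bbar) (gdeg Rdga p + 0) (incl_gen p)"
      by (cases p) (simp_all add: Bbar_def Rdga_def)
  qed (simp_all add: Bbar_def Rdga_def)
next
  fix x r
  have "frag_extend bd_cell (incl_gen p) = 0" for p
    by (cases p) (simp_all add: bd_cell_def bcell_def)
  then show "bar_incl (diff Rdga r) = diff Bbar (bar_incl r)"
    by (simp add: Bbar_def Rdga_def frag_extend_frag_extend)
  have "Poly_Mapping.lookup (incl_gen p) [] = (if p = V0 then 1 else 0)" for p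
    by (cases p) simp_all
  then show "aug Bbar (bar_incl r) = aug Rdga r"
    by (simp add: Bbar_def Rdga_def lookup_frag_extend_delta)
next
  fix z t a b
  show "bar_incl (mult Rdga a b) = mult Bbar (bar_incl a) (bar_incl b)"
    using frag_extend_frag_extend2[of a UNIV b UNIV incl_gen rmul_gen shuffle_cells incl_gen incl_gen]
    by (simp add: Bbar_def Rdga_def frag_extend2_def bar_incl_rmul_gen)
qed (simp add: Bbar_def Rdga_def)

lemma bar_proj_bar_incl: "bar_proj (bar_incl r) = r"
proof -
  have "bar_proj (incl_gen p) = frag_of p" for p
    by (cases p) (simp_all add: proj_gen_def)
  then show ?thesis by (simp add: frag_extend_frag_extend flip: frag_expansion)
qed

section \<open>The homotopy \<Phi>\<close>

definition htpy_gen :: "nat list \<Rightarrow> nat list \<Rightarrow>\<^sub>0 int" where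
  "htpy_gen s = (if s = [] then 0 else
     frag_cmul ((-1)^(length s - 1)) (\<Sum>i\<in>{1..<last s}. frag_of (butlast s @ [i, 1])))"

abbreviation bar_htpy :: "(nat list \<Rightarrow>\<^sub>0 int) \<Rightarrow> nat list \<Rightarrow>\<^sub>0 int" where
  "bar_htpy \<equiv> frag_extend htpy_gen"

lemma htpy_gen_snoc:
  "htpy_gen (v @ [x]) = frag_cmul ((-1)^length v) (\<Sum>i\<in>{1..<x}. frag_of (v @ [i, 1]))"
  by (simp add: htpy_gen_def)

lemma homog_htpy_gen: "homog length (Suc (length s)) (htpy_gen s)"
  by (auto simp: htpy_gen_def intro!: homog_frag_cmul homog_sum)

lemma htpy_gen_in_bcells: "s \<in> bcells x \<Longrightarrow> Poly_Mapping.keys (htpy_gen s) \<subseteq> bcells x"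
proof (cases s rule: rev_cases)
  case (snoc v y)
  assume "s \<in> bcells x"
  then have "Poly_Mapping.keys (frag_of (v @ [i, 1])) \<subseteq> bcells x" if "i \<in> {1..<y}" for i
    using snoc that by (auto simp: bcells_def)
  then show ?thesis
    using keys_sum[of "\<lambda>i. frag_of (v @ [i, 1])" "{1..<y}"] snoc
    by (auto simp: htpy_gen_snoc)
qed (simp add: htpy_gen_def)

lemma bar_htpy_frag_append:
  assumes "homog length k c"
  shows "bar_htpy (frag_append [x] c) = frag_cmul ((-1)^k) (\<Sum>i\<in>{1..<x}. frag_append [i, 1] c)"
proof -
  have "Poly_Mapping.keys c \<subseteq> {w. length w = k}"
    using assms by (auto simp: homog_def)
  then show ?thesis
  proof (induction c rule: frag_induction)
    case (diff a b)
    then show ?case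
      by (simp add: frag_append_diff frag_extend_diff sum_subtractf frag_cmul_diff_distrib2)
  qed (simp_all add: frag_append_def htpy_gen_snoc)
qed

lemma sum_atLeastLessThan_split:
  fixes f :: "nat \<Rightarrow> 'a::comm_monoid_add"
  assumes "1 \<le> y" "0 < x"
  shows "(\<Sum>j\<in>{1..<y + x}. f j) = (\<Sum>j\<in>{1..<y}. f j) + f y + (\<Sum>i\<in>{1..<x}. f (y + i))"
proof -
  have "(\<Sum>j\<in>{1..<y + x}. f j) = (\<Sum>j\<in>{1..<y}. f j) + (\<Sum>j\<in>{y..<y + x}. f j)"
    using assms by (simp add: sum.atLeastLessThan_concat)
  also have "(\<Sum>j\<in>{y..<y + x}. f j) = f y + (\<Sum>j\<in>{Suc y..<y + x}. f j)"
    using assms by (simp add: sum.atLeast_Suc_lessThan)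
  also have "(\<Sum>j\<in>{Suc y..<y + x}. f j) = (\<Sum>i\<in>{1..<x}. f (y + i))"
    using sum.shift_bounds_nat_ivl[of f 1 y x] by (simp add: add.commute)
  finally show ?thesis
    by (simp add: add.assoc)
qed

lemma bd_htpy_gen_snoc:
  assumes v: "v \<noteq> []" "\<forall>j \<in> set v. 0 < j" and x: "0 < x"
  defines "e \<equiv> (-1::int) ^ length v"
  shows "frag_extend bd_cell (htpy_gen (v @ [x]))
    = frag_cmul e (\<Sum>i\<in>{1..<x}. frag_append [i, 1] (bd_front v))
      + (\<Sum>i\<in>{1..<x}. frag_of (butlast v @ [last v + i, 1]))
      - frag_of (v @ [x]) + frag_of (v @ [1])"
proof -
  let ?A = "\<lambda>i. frag_append [i, 1] (bd_front v)"
  let ?B = "\<lambda>i. frag_of (butlast v @ [last v + i, 1])"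
  let ?C = "\<lambda>i. frag_of (v @ [i])"
  have "bd_cell (v @ [i, 1]) = ?A i + frag_cmul e (?B i - (?C (Suc i) - ?C i))" if "i \<in> {1..<x}" for i
    using bd_cell_snoc_snoc_1[OF v, of i] that
    by (simp add: e_def frag_cmul_distrib2 frag_cmul_diff_distrib2 algebra_simps)
  then have "(\<Sum>i\<in>{1..<x}. bd_cell (v @ [i, 1]))
      = (\<Sum>i\<in>{1..<x}. ?A i) + frag_cmul e (\<Sum>i\<in>{1..<x}. ?B i - (?C (Suc i) - ?C i))"
    by (simp add: sum.distrib frag_cmul_sum)
  also have "(\<Sum>i\<in>{1..<x}. ?B i - (?C (Suc i) - ?C i)) = (\<Sum>i\<in>{1..<x}. ?B i) - (?C x - ?C 1)"
    using sum_Suc_diff'[of 1 x ?C] x by (simp add: sum_subtractf)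
  moreover have "e * e = 1"
    by (simp add: e_def flip: power_add)
  ultimately show ?thesis
    by (simp add: htpy_gen_snoc frag_extend_cmul frag_extend_sum o_def frag_cmul_distrib2
        frag_cmul_diff_distrib2 e_def[symmetric])
qed

lemma htpy_bd_cell_snoc:
  assumes v: "v \<noteq> []" "\<forall>j \<in> set v. 0 < j" and x: "0 < x"
  defines "e \<equiv> (-1::int) ^ length v"
  shows "bar_htpy (bd_cell (v @ [x]))
    = - frag_cmul e (\<Sum>i\<in>{1..<x}. frag_append [i, 1] (bd_front v))
      - (\<Sum>i\<in>{1..<x}. frag_of (butlast v @ [last v + i, 1])) - frag_of (v @ [1])"
proof -
  obtain w y where v_eq: "v = w @ [y]"
    using v(1) rev_exhaust by blast
  have y: "0 < y"
    using v(2) v_eq by simp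
  have sign: "(-1::int) ^ length w = - e"
    by (simp add: e_def v_eq)
  let ?E = "\<lambda>j. frag_of (w @ [j, 1])"
  have "bar_htpy (bd_cell (v @ [x]))
      = bar_htpy (frag_append [x] (bd_front v))
        + frag_cmul e (htpy_gen (w @ [y + x])) - frag_cmul e (htpy_gen (w @ [y]))"
    using bd_cell_snoc[OF v x] v_eq
    by (simp add: e_def frag_extend_add frag_extend_diff frag_extend_cmul add.commute)
  also have "bar_htpy (frag_append [x] (bd_front v))
      = frag_cmul (- e) (\<Sum>i\<in>{1..<x}. frag_append [i, 1] (bd_front v))"
    using bar_htpy_frag_append[OF homog_bd_front, of x v] sign by (simp add: v_eq)
  also have "htpy_gen (w @ [y + x])
      = frag_cmul (- e) ((\<Sum>j\<in>{1..<y}. ?E j) + ?E y + (\<Sum>i\<in>{1..<x}. ?E (y + i)))"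
    using sum_atLeastLessThan_split[of y x ?E] y x sign by (simp add: htpy_gen_snoc)
  also have "htpy_gen (w @ [y]) = frag_cmul (- e) (\<Sum>j\<in>{1..<y}. ?E j)"
    using sign by (simp add: htpy_gen_snoc)
  moreover have "e * e = 1"
    by (simp add: e_def flip: power_add)
  ultimately show ?thesis
    by (simp add: v_eq frag_cmul_distrib2 algebra_simps)
qed

lemma homotopy_gen:
  assumes "\<forall>j \<in> set s. 0 < j"
  shows "frag_extend bd_cell (htpy_gen s) + bar_htpy (bd_cell s) = bar_incl (proj_gen s) - frag_of s"
proof (cases s rule: rev_cases)
  case (snoc v x)
  have x: "0 < x"
    using assms snoc by simp
  show ?thesis
  proof (cases "v = []")
    case True
    have "frag_extend bd_cell (htpy_gen s)
        = (\<Sum>i\<in>{1..<x}. frag_of [1] - (frag_of [Suc i] - frag_of [i]))"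
      using snoc True
      by (simp add: htpy_gen_def frag_extend_sum o_def bd_cell_def bcell_def bmerge_def
          algebra_simps)
    also have "\<dots> = frag_cmul (int x - 1) (frag_of [1]) - (frag_of [x] - frag_of [1])"
      using sum_Suc_diff'[of 1 x "\<lambda>i. frag_of [i]"] x
      by (simp only: sum_subtractf) (simp add: sum_frag_const of_nat_diff)
    also have "\<dots> = frag_cmul (int x) (frag_of [1]) - frag_of [x]"
      by (simp add: frag_cmul_diff_distrib)
    finally show ?thesis
      using snoc True by (simp add: bd_cell_def bcell_def proj_gen_def frag_extend_cmul)
  next
    case False
    then show ?thesis
      using bd_htpy_gen_snoc[OF False _ x] htpy_bd_cell_snoc[OF False _ x] assms snoc
      by (simp add: proj_gen_def minus_frag_cmul[symmetric] del: minus_frag_cmul)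
  qed
qed (simp add: htpy_gen_def bd_cell_def proj_gen_def)

lemma bar_homotopy:
  assumes "Poly_Mapping.keys c \<subseteq> bcells x"
  shows "frag_extend bd_cell (bar_htpy c) + bar_htpy (frag_extend bd_cell c) = bar_incl (bar_proj c) - c"
  using assms
proof (induction c rule: frag_induction)
  case (one s)
  then show ?case using homotopy_gen[OF bcells_pos] by simp
next
  case (diff a b)
  have "frag_extend bd_cell (bar_htpy (a - b)) + bar_htpy (frag_extend bd_cell (a - b))
      = (frag_extend bd_cell (bar_htpy a) + bar_htpy (frag_extend bd_cell a))
        - (frag_extend bd_cell (bar_htpy b) + bar_htpy (frag_extend bd_cell b))"
    by (simp add: frag_extend_diff)
  then show ?case
    using diff.IH by (simp add: frag_extend_diff)
qed simp

lemma mod_mor_bar_htpy: "mod_mor Bbar Bbar 1 (\<lambda>x. bar_htpy)"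
  by (rule mod_mor_frag_extend[where cells_A = bcells and cells_B = bcells])
    (simp_all add: Bbar_def homog_htpy_gen htpy_gen_in_bcells)

lemma bar_htpy_bar_incl: "bar_htpy (bar_incl r) = 0"
proof -
  have "bar_htpy (incl_gen p) = 0" for p
    by (cases p) (simp_all add: htpy_gen_def)
  then show ?thesis by (simp add: frag_extend_frag_extend)
qed

lemma bar_proj_bar_htpy: "bar_proj (bar_htpy c) = 0"
proof -
  have "bar_proj (htpy_gen s) = 0" for s
  proof (cases "s = []")
    case False
    then show ?thesis by (intro bar_proj_long[OF homog_htpy_gen]) (simp add: Suc_le_eq)
  qed (simp add: htpy_gen_def)
  then show ?thesis by (simp add: frag_extend_frag_extend)
qed

lemma bar_htpy_bar_htpy: "bar_htpy (bar_htpy c) = 0"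
proof -
  have "htpy_gen (v @ [i, 1]) = 0" for v i
    using htpy_gen_snoc[of "v @ [i]" 1] by simp
  then have "bar_htpy (htpy_gen s) = 0" for s
    by (simp add: htpy_gen_def frag_extend_cmul frag_extend_sum o_def)
  then show ?thesis by (simp add: frag_extend_frag_extend)
qed

theorem theorem7p10:
  shows "\<exists>f g.
     dga_mor Bbar Rdga f \<and>
     f 0 (frag_of []) = frag_of V0 \<and>
     (\<forall>x::nat. 1 \<le> x \<longrightarrow> f x (frag_of [x]) = frag_cmul (int x) (frag_of W0)) \<and>
     dga_mor Rdga Bbar g \<and>
     g 0 (frag_of V0) = frag_of [] \<and>
     g 1 (frag_of W0) = frag_of [1] \<and>
     (\<forall>x. \<forall>r \<in> carr Rdga x. f x (g x r) = r) \<and>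
     (\<exists>\<Phi>. mod_mor Bbar Bbar 1 \<Phi> \<and>
        (\<forall>x. \<forall>c \<in> carr Bbar x.
           diff Bbar (\<Phi> x c) + \<Phi> x (diff Bbar c) = g x (f x c) - c) \<and>
        (\<forall>x. \<forall>r \<in> carr Rdga x. \<Phi> x (g x r) = 0) \<and>
        (\<forall>x. \<forall>c \<in> carr Bbar x. f x (\<Phi> x c) = 0) \<and>
        (\<forall>x. \<forall>c \<in> carr Bbar x. \<Phi> x (\<Phi> x c) = 0))"
proof (intro exI conjI)
  show "dga_mor Bbar Rdga (\<lambda>x. bar_proj)" by (rule dga_mor_bar_proj)
  show "dga_mor Rdga Bbar (\<lambda>x. bar_incl)" by (rule dga_mor_bar_incl)
  show "mod_mor Bbar Bbar 1 (\<lambda>x. bar_htpy)" by (rule mod_mor_bar_htpy)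
  show "\<forall>x. \<forall>c \<in> carr Bbar x.
      diff Bbar (bar_htpy c) + bar_htpy (diff Bbar c) = bar_incl (bar_proj c) - c"
    by (auto simp: Bbar_def intro: bar_homotopy)
qed (simp_all add: proj_gen_def bar_proj_bar_incl bar_htpy_bar_incl bar_proj_bar_htpy
    bar_htpy_bar_htpy)

end
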